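(* Let $G$ be a compact group and $z:G\to\mathbb C\setminus\{0\}$ a continuous central function. Then the Ewens measure $\mu^{\mathrm{Ewens}}_{S_n(G)}$ is a probability measure on $S_n(G)$, i.e. $$\int_{S_n(G)} n!\,\frac{\prod_{c\in[G]}z(c)^{[x](c)}\overline{z(c)}^{[x](c)}}{I(I+1)\cdots(I+n-1)}\,d\mu_{S_n(G)}(x)=1,\qquad I=\int_G|z(g)|^2d\mu_G(g).$$
   Context: $G$ compact with normalized Haar measure $\mu_G$; $[G]$ its conjugacy classes; central functions are regarded as functions on $[G]$. $S_n(G)=G^n\rtimes S_n$ with elements $((g_1,\dots,g_n),s)$ and product $((g_i),s)((h_i),t)=((g_ih_{s^{-1}(i)}),st)$. For $x=((g_1,\dots,g_n),s)$, the color of a cycle $(i_1\cdots i_r)$ of $s$ is the conjugacy class of $g_{i_r}\cdots g_{i_1}$, and $[x](c)$ is the number of cycles of $s$ of color $c$. $\mu_{S_n(G)}$ is the product of Haar measure on $G^n$ and the uniform probability measure on $S_n$. The Ewens measure $\mu^{\mathrm{Ewens}}_{S_n(G)}$ is the measure with the displayed density with respect to $\mu_{S_n(G)}$. *)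

theory Defs
  imports "HOL-Probability.Probability" "HOL-Algebra.Group" "HOL-Combinatorics.Orbits"
begin

definition borel_of_top :: "'a topology \<Rightarrow> 'a measure" where
  "borel_of_top T = sigma (topspace T) {U. openin T U}"

definition compact_group :: "('a, 'b) monoid_scheme \<Rightarrow> 'a topology \<Rightarrow> bool" where
  "compact_group G T \<longleftrightarrow> group G \<and> topspace T = carrier G \<and>
     compact_space T \<and> Hausdorff_space T \<and>
     continuous_map (prod_topology T T) T (\<lambda>(x, y). x \<otimes>\<^bsub>G\<^esub> y) \<and>
     continuous_map T T (\<lambda>x. inv\<^bsub>G\<^esub> x)"

definition normalized_haar :: "('a, 'b) monoid_scheme \<Rightarrow> 'a topology \<Rightarrow> 'a measure \<Rightarrow> bool" where
  "normalized_haar G T \<mu> \<longleftrightarrow>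
     prob_space \<mu> \<and> space \<mu> = carrier G \<and> sets \<mu> = sets (borel_of_top T) \<and>
     (\<forall>h\<in>carrier G. \<forall>A\<in>sets \<mu>. measure \<mu> ((\<lambda>x. h \<otimes>\<^bsub>G\<^esub> x) ` A) = measure \<mu> A) \<and>
     (\<forall>h\<in>carrier G. \<forall>A\<in>sets \<mu>. measure \<mu> ((\<lambda>x. x \<otimes>\<^bsub>G\<^esub> h) ` A) = measure \<mu> A) \<and>
     (\<forall>A\<in>sets \<mu>. measure \<mu> A = (INF U\<in>{U. openin T U \<and> A \<subseteq> U}. measure \<mu> U)) \<and>
     (\<forall>U. openin T U \<longrightarrow> measure \<mu> U = (SUP K\<in>{K. compactin T K \<and> K \<subseteq> U}. measure \<mu> K))"

definition conj_class :: "('a, 'b) monoid_scheme \<Rightarrow> 'a \<Rightarrow> 'a set" where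
  "conj_class G g = {h \<otimes>\<^bsub>G\<^esub> g \<otimes>\<^bsub>G\<^esub> inv\<^bsub>G\<^esub> h | h. h \<in> carrier G}"

definition conj_classes :: "('a, 'b) monoid_scheme \<Rightarrow> 'a set set" where
  "conj_classes G = conj_class G ` carrier G"

definition central_fun :: "('a, 'b) monoid_scheme \<Rightarrow> ('a \<Rightarrow> 'c) \<Rightarrow> bool" where
  "central_fun G z \<longleftrightarrow> (\<forall>g\<in>carrier G. \<forall>h\<in>carrier G. z (h \<otimes>\<^bsub>G\<^esub> g \<otimes>\<^bsub>G\<^esub> inv\<^bsub>G\<^esub> h) = z g)"

text \<open>A central function regarded as a function on conjugacy classes.\<close>
definition class_val :: "('a \<Rightarrow> 'c) \<Rightarrow> 'a set \<Rightarrow> 'c" where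
  "class_val z c = z (SOME g. g \<in> c)"

text \<open>Elements are pairs (g, s) with g : {..<n} \<rightarrow> carrier G (the tuple (g_0,...,g_{n-1}))
  and s a permutation of {..<n}.\<close>

fun cyc_prod :: "('a, 'b) monoid_scheme \<Rightarrow> (nat \<Rightarrow> 'a) \<Rightarrow> (nat \<Rightarrow> nat) \<Rightarrow> nat \<Rightarrow> nat \<Rightarrow> 'a" where
  "cyc_prod G g s i 0 = \<one>\<^bsub>G\<^esub>"
| "cyc_prod G g s i (Suc k) = g ((s ^^ k) i) \<otimes>\<^bsub>G\<^esub> cyc_prod G g s i k"

definition perm_cycles :: "nat \<Rightarrow> (nat \<Rightarrow> nat) \<Rightarrow> nat set set" where
  "perm_cycles n s = (\<lambda>i. orbit s i) ` {..<n}"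

text \<open>The color of the cycle C = (i_1 ... i_r) (with s(i_k) = i_{k+1}) is the conjugacy class
  of g_{i_r} \<otimes> ... \<otimes> g_{i_1}; this does not depend on the chosen starting point i_1.\<close>
definition cycle_color :: "('a, 'b) monoid_scheme \<Rightarrow> (nat \<Rightarrow> 'a) \<Rightarrow> (nat \<Rightarrow> nat) \<Rightarrow> nat set \<Rightarrow> 'a set" where
  "cycle_color G g s C = conj_class G (cyc_prod G g s (SOME i. i \<in> C) (card C))"

definition cycle_count :: "('a, 'b) monoid_scheme \<Rightarrow> nat \<Rightarrow> (nat \<Rightarrow> 'a) \<times> (nat \<Rightarrow> nat) \<Rightarrow> 'a set \<Rightarrow> nat" where
  "cycle_count G n x c = card {C \<in> perm_cycles n (snd x). cycle_color G (fst x) (snd x) C = c}"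

definition wreath_measure :: "nat \<Rightarrow> 'a measure \<Rightarrow> ((nat \<Rightarrow> 'a) \<times> (nat \<Rightarrow> nat)) measure" where
  "wreath_measure n \<mu> = (PiM {..<n} (\<lambda>_. \<mu>)) \<Otimes>\<^sub>M uniform_count_measure {s. s permutes {..<n}}"

text \<open>The Ewens density (w.r.t. \<mu>_{S_n(G)}); the product over [G] has only finitely many factors
  different from 1, namely those classes c with [x](c) \<noteq> 0.\<close>
definition ewens_density :: "('a, 'b) monoid_scheme \<Rightarrow> 'a measure \<Rightarrow> ('a \<Rightarrow> complex) \<Rightarrow> nat
    \<Rightarrow> (nat \<Rightarrow> 'a) \<times> (nat \<Rightarrow> nat) \<Rightarrow> complex" where
  "ewens_density G \<mu> z n x =
     (let I = (\<integral>g. (cmod (z g))\<^sup>2 \<partial>\<mu>) in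
      of_nat (fact n) *
      (\<Prod>c\<in>{c \<in> conj_classes G. cycle_count G n x c \<noteq> 0}.
          class_val z c ^ cycle_count G n x c * cnj (class_val z c) ^ cycle_count G n x c)
      / complex_of_real (pochhammer I n))"

end

theory Submission
  imports Defs "HOL-Combinatorics.Cycles"
begin

text \<open>Since \<open>z\<close> is central, the numerator of the Ewens density at \<open>(g, s)\<close> is the product,
  over the cycles of \<open>s\<close>, of \<open>|z|\<^sup>2\<close> at the products of the \<open>g\<^sub>i\<close> around the cycles;
  call it \<open>W\<^sub>n(s, g)\<close>. It suffices to show that \<open>S\<^sub>n\<close>, the sum over all \<open>s\<close> of the Haar
  integral of \<open>W\<^sub>n(s, -)\<close>, equals \<open>I(I+1)\<dots>(I+n-1)\<close>. Every permutation of \<open>{0..n}\<close> is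
  uniquely \<open>(p n) \<circ> s'\<close> with \<open>s'\<close> a permutation of \<open>{0..<n}\<close> and \<open>p \<le> n\<close>. For \<open>p = n\<close>
  the point \<open>n\<close> is a new fixed point, contributing a factor \<open>\<integral>|z|\<^sup>2 = I\<close>. For \<open>p < n\<close>
  the point \<open>n\<close> is inserted into the cycle of \<open>p\<close>, and \<open>W\<^sub>n\<^sub>+\<^sub>1(s, g) = W\<^sub>n(s', g')\<close>
  where \<open>g'\<close> replaces \<open>g\<^sub>p\<close> by \<open>g\<^sub>p g\<^sub>n\<close>; right invariance of the Haar measure in the
  variable \<open>g\<^sub>p\<close> then makes \<open>g\<^sub>n\<close> disappear. Hence \<open>S\<^sub>n\<^sub>+\<^sub>1 = (I + n) S\<^sub>n\<close>.\<close>

lemma borel_measurable_continuous_map_compact: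
  fixes X :: "'x topology" and M :: "'x measure" and f :: "'x \<Rightarrow> real"
  assumes "compact_space X" and "space M = topspace X"
    and basis: "\<And>U x. openin X U \<Longrightarrow> x \<in> U \<Longrightarrow> \<exists>B\<in>sets M. openin X B \<and> x \<in> B \<and> B \<subseteq> U"
    and f: "continuous_map X euclideanreal f"
  shows "f \<in> borel_measurable M"
proof (subst borel_measurable_iff_greater, intro allI)
  fix a :: real
  define S where "S = {x \<in> topspace X. a < f x}"
  have "openin X S"
    unfolding S_def using openin_continuous_map_preimage[OF f, of "{a<..}"] by auto
  \<comment> \<open>Open sets need not be measurable (think of product \<open>\<sigma>\<close>-algebras), but each compact set
    \<open>{f \<ge> a + 1/(m+1)}\<close> is covered by finitely many measurable open subsets of \<open>S\<close>.\<close>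
  have "\<exists>V\<in>sets M. {x \<in> topspace X. a + 1 / Suc m \<le> f x} \<subseteq> V \<and> V \<subseteq> S" for m :: nat
  proof -
    define K where "K = {x \<in> topspace X. a + 1 / Suc m \<le> f x}"
    have "closedin X K"
      unfolding K_def using closedin_continuous_map_preimage[OF f, of "{a + 1 / Suc m..}"] by auto
    then have "compactin X K" using \<open>compact_space X\<close> closedin_compact_space by blast
    moreover have "K \<subseteq> S"
      unfolding K_def S_def by (auto intro: less_le_trans[of _ "a + 1 / Suc m"])
    then have "K \<subseteq> \<Union>{B \<in> sets M. openin X B \<and> B \<subseteq> S}"
      using basis[OF \<open>openin X S\<close>] by blast
    ultimately obtain F where F: "finite F" "F \<subseteq> {B \<in> sets M. openin X B \<and> B \<subseteq> S}" "K \<subseteq> \<Union>F"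
      unfolding compactin_def by (metis (no_types, lifting) mem_Collect_eq)
    then have "\<Union>F \<in> sets M" by (intro sets.finite_Union) auto
    with F show ?thesis unfolding K_def by blast
  qed
  then obtain V where V: "\<And>m. V m \<in> sets M"
    "\<And>m. {x \<in> topspace X. a + 1 / Suc m \<le> f x} \<subseteq> V m" "\<And>m. V m \<subseteq> S"
    by metis
  have "S \<subseteq> (\<Union>m. V m)"
  proof
    fix x assume "x \<in> S"
    then obtain m :: nat where "1 / Suc m < f x - a"
      unfolding S_def using reals_Archimedean[of "f x - a"] by (auto simp: inverse_eq_divide)
    with \<open>x \<in> S\<close> V(2)[of m] show "x \<in> (\<Union>m. V m)" unfolding S_def by auto
  qed
  with V(3) have "S = (\<Union>m. V m)" by blast
  with V(1) \<open>space M = topspace X\<close> show "{x \<in> space M. a < f x} \<in> sets M"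
    unfolding S_def by auto
qed

lemma continuous_map_compact_bounded:
  fixes f :: "'x \<Rightarrow> real"
  assumes "compact_space X" and "continuous_map X euclideanreal f"
  obtains B where "\<And>x. x \<in> topspace X \<Longrightarrow> \<bar>f x\<bar> \<le> B"
proof -
  have "compact (f ` topspace X)"
    using image_compactin[OF assms(1)[unfolded compact_space_def] assms(2)] by simp
  then obtain B where "\<forall>y\<in>f ` topspace X. norm y \<le> B"
    using compact_imp_bounded bounded_iff by metis
  then show thesis using that by auto
qed

lemma integral_pair_uniform_count_measure:
  fixes f :: "'x \<Rightarrow> 's \<Rightarrow> real"
  assumes "sigma_finite_measure M" and "finite S" and "S \<noteq> {}"
    and f: "\<And>s. s \<in> S \<Longrightarrow> integrable M (\<lambda>x. f x s)"
  shows "(\<integral>(x, s). f x s \<partial>(M \<Otimes>\<^sub>M uniform_count_measure S)) = (\<Sum>s\<in>S. \<integral>x. f x s \<partial>M) / card S"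
proof -
  let ?U = "uniform_count_measure S"
  interpret U: prob_space ?U using assms(2,3) by (rule prob_space_uniform_count_measure)
  interpret pair_sigma_finite M ?U
    using assms(1) U.sigma_finite_measure_axioms by (simp add: pair_sigma_finite_def)
  have "(\<lambda>p. f (fst p) (snd p)) \<in> borel_measurable (M \<Otimes>\<^sub>M ?U)"
  proof (rule measurable_compose_countable'[where I = S])
    show "snd \<in> measurable (M \<Otimes>\<^sub>M ?U) (count_space S)"
      using measurable_snd measurable_cong_sets sets_uniform_count_measure_count_space by blast
  qed (use f assms(2) countable_finite in auto)
  moreover have "integrable M (\<lambda>x. \<integral>s. norm (f x s) \<partial>?U)"
    using f assms(2) by (simp add: integral_uniform_count_measure)
  moreover have "integrable ?U g" for g :: "'s \<Rightarrow> real"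
    unfolding uniform_count_measure_def using assms(2) by (rule integrable_point_measure_finite)
  ultimately have "integrable (M \<Otimes>\<^sub>M ?U) (\<lambda>(x, s). f x s)"
    by (intro Fubini_integrable) (auto simp: case_prod_beta')
  then have "(\<integral>(x, s). f x s \<partial>(M \<Otimes>\<^sub>M ?U)) = (\<integral>s. (\<integral>x. f x s \<partial>M) \<partial>?U)"
    by (rule integral_snd[symmetric])
  also have "\<dots> = (\<Sum>s\<in>S. \<integral>x. f x s \<partial>M) / card S"
    by (rule integral_uniform_count_measure[OF assms(2)])
  finally show ?thesis .
qed

section \<open>Orbits of permutations\<close>

lemma card_orbit_eq_funpow_dist1:
  assumes "permutation s"
  shows "card (orbit s x) = funpow_dist1 s x x"
proof -
  have x: "x \<in> orbit s x" using assms by (rule permutation_self_in_orbit)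
  have "orbit s x = (\<lambda>k. (s ^^ k) x) ` {0..<funpow_dist1 s x x}"
    by (rule orbit_conv_funpow_dist1[OF x])
  moreover have "inj_on (\<lambda>k. (s ^^ k) x) {0..<funpow_dist1 s x x}"
    by (rule inj_on_funpow_dist1[OF x])
  ultimately show ?thesis by (simp add: card_image)
qed

lemma funpow_card_orbit: "permutation s \<Longrightarrow> (s ^^ card (orbit s x)) x = x"
  by (metis card_orbit_eq_funpow_dist1 funpow_dist1_prop permutation_self_in_orbit)

lemma card_orbit_pos: "permutation s \<Longrightarrow> 0 < card (orbit s x)"
  by (simp add: card_orbit_eq_funpow_dist1)

lemma funpow_neq_below_card_orbit:
  "permutation s \<Longrightarrow> 0 < k \<Longrightarrow> k < card (orbit s x) \<Longrightarrow> (s ^^ k) x \<noteq> x"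
  by (metis card_orbit_eq_funpow_dist1 funpow_dist1_least)

lemma funpow_in_self_orbit: "permutation s \<Longrightarrow> (s ^^ k) x \<in> orbit s x"
  using funpow_in_orbit permutation_self_in_orbit by fast

lemma orbit_eq_if_in_orbit: "permutation s \<Longrightarrow> y \<in> orbit s x \<Longrightarrow> orbit s y = orbit s x"
  by (rule orbit_cyclic_eq3[OF cyclic_on_orbit'])

lemma permutation_permutes_lessThan: "s permutes {..<(n::nat)} \<Longrightarrow> permutation s"
  using permutation_permutes by blast

lemma transpose_comp_permutes_Suc:
  "s' permutes {..<n} \<Longrightarrow> p \<le> n \<Longrightarrow> Transposition.transpose p n \<circ> s' permutes {..<Suc n}"
  by (auto intro!: permutes_compose permutes_swap_id intro: permutes_subset)

text \<open>Composing with the transposition \<open>(p n)\<close> inserts the new point \<open>n\<close> in front of \<open>p\<close> in the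
  cycle of \<open>p\<close>, leaving the other cycles alone.\<close>

context
  fixes n p :: nat and s' :: "nat \<Rightarrow> nat"
  assumes s': "s' permutes {..<n}" and p: "p < n"
begin

lemma funpow_transpose_comp_new_point:
  assumes "k < card (orbit s' p)"
  shows "((Transposition.transpose p n \<circ> s') ^^ Suc k) n = (s' ^^ k) p"
  using assms
proof (induction k)
  case 0
  show ?case using permutes_not_in[OF s', of n] by simp
next
  case (Suc k)
  have perm: "permutation s'" using s' by (rule permutation_permutes_lessThan)
  have "(s' ^^ Suc k) p \<noteq> p" using Suc.prems by (intro funpow_neq_below_card_orbit[OF perm]) auto
  moreover have "(s' ^^ Suc k) p \<noteq> n"
    using permutes_orbit_subset[OF s'] funpow_in_self_orbit[OF perm, of "Suc k" p] p by fastforce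
  ultimately have "Transposition.transpose p n (s' ((s' ^^ k) p)) = (s' ^^ Suc k) p" by simp
  with Suc show ?case by simp
qed

lemma orbit_transpose_comp_new_point:
  "orbit (Transposition.transpose p n \<circ> s') n = insert n (orbit s' p)"
proof -
  let ?s = "Transposition.transpose p n \<circ> s'"
  have perm: "permutation s'" using s' by (rule permutation_permutes_lessThan)
  define r where "r = card (orbit s' p)"
  have "0 < r" unfolding r_def using perm by (rule card_orbit_pos)
  then obtain r' where r': "r = Suc r'" using gr0_conv_Suc by blast
  have "(?s ^^ Suc r) n = ?s ((s' ^^ r') p)"
    using funpow_transpose_comp_new_point[of r'] r' unfolding r_def by simp
  also have "\<dots> = Transposition.transpose p n ((s' ^^ r) p)" by (simp add: r')
  also have "\<dots> = n" using funpow_card_orbit[OF perm] unfolding r_def by simp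
  finally have "orbit ?s n = {(?s ^^ m) n | m. m < Suc r}" by (rule orbit_altdef_bounded) simp
  also have "\<dots> = (\<lambda>m. (?s ^^ m) n) ` {..<Suc r}" by blast
  also have "\<dots> = insert n ((\<lambda>k. (?s ^^ Suc k) n) ` {..<r})"
    by (simp add: lessThan_Suc_eq_insert_0 image_image del: funpow.simps)
  also have "(\<lambda>k. (?s ^^ Suc k) n) ` {..<r} = (\<lambda>k. (s' ^^ k) p) ` {..<r}"
    using funpow_transpose_comp_new_point unfolding r_def by (intro image_cong) auto
  also have "\<dots> = orbit s' p"
    using orbit_altdef_bounded[OF funpow_card_orbit[OF perm] card_orbit_pos[OF perm]]
    unfolding r_def by blast
  finally show ?thesis .
qed

lemma funpow_transpose_comp_other_point:
  assumes "i < n" and "p \<notin> orbit s' i"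
  shows "((Transposition.transpose p n \<circ> s') ^^ k) i = (s' ^^ k) i"
proof (induction k)
  case (Suc k)
  have "s' ((s' ^^ k) i) \<in> orbit s' i"
    using funpow_in_self_orbit[OF permutation_permutes_lessThan[OF s'], of "Suc k" i] by simp
  moreover have "orbit s' i \<subseteq> {..<n}" using permutes_orbit_subset[OF s'] assms(1) by simp
  ultimately have "s' ((s' ^^ k) i) \<noteq> p" "s' ((s' ^^ k) i) \<noteq> n" using assms(2) by auto
  with Suc show ?case by simp
qed simp

lemma orbit_transpose_comp_old_point:
  assumes "i < n"
  shows "orbit (Transposition.transpose p n \<circ> s') i =
    (if p \<in> orbit s' i then insert n (orbit s' i) else orbit s' i)"
proof -
  let ?s = "Transposition.transpose p n \<circ> s'"
  have perm: "permutation s'" "permutation ?s"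
    using s' p by (auto intro!: permutation_compose permutation_swap_id
        intro: permutation_permutes_lessThan)
  show ?thesis
  proof (cases "p \<in> orbit s' i")
    case True
    then have "orbit s' i = orbit s' p" by (rule orbit_eq_if_in_orbit[OF perm(1), symmetric])
    moreover have "i \<in> orbit ?s n"
      using orbit_transpose_comp_new_point permutation_self_in_orbit[OF perm(1), of i] calculation
      by simp
    ultimately show ?thesis
      using True orbit_eq_if_in_orbit[OF perm(2), of i n] orbit_transpose_comp_new_point by simp
  next
    case False
    then show ?thesis
      using funpow_transpose_comp_other_point[OF assms False]
      by (simp add: orbit_altdef_permutation[OF perm(1)] orbit_altdef_permutation[OF perm(2)])
  qed
qed

lemma perm_cycles_transpose_comp:
  "perm_cycles (Suc n) (Transposition.transpose p n \<circ> s') =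
    (\<lambda>C. if p \<in> C then insert n C else C) ` perm_cycles n s'"
proof -
  have "perm_cycles (Suc n) (Transposition.transpose p n \<circ> s') =
      insert (insert n (orbit s' p)) ((\<lambda>i. if p \<in> orbit s' i then insert n (orbit s' i) else orbit s' i) ` {..<n})"
    unfolding perm_cycles_def lessThan_Suc
    using orbit_transpose_comp_new_point orbit_transpose_comp_old_point by simp
  also have "\<dots> = (\<lambda>C. if p \<in> C then insert n C else C) ` perm_cycles n s'"
    unfolding perm_cycles_def using p permutation_self_in_orbit[OF permutation_permutes_lessThan[OF s']]
    by (auto simp: image_image)
  finally show ?thesis .
qed

end

lemma bij_betw_transpose_comp_permutes:
  "bij_betw (\<lambda>(s', p). Transposition.transpose p n \<circ> s')
     ({s. s permutes {..<n}} \<times> {..n}) {s. s permutes {..<Suc n}}"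
proof (rule bij_betw_imageI)
  show "inj_on (\<lambda>(s', p). Transposition.transpose p n \<circ> s') ({s. s permutes {..<n}} \<times> {..n})"
  proof (rule inj_onI, clarsimp)
    fix s1 p1 s2 p2
    assume s: "s1 permutes {..<n}" "s2 permutes {..<n}"
      and eq: "Transposition.transpose p1 n \<circ> s1 = Transposition.transpose p2 n \<circ> s2"
    have "p1 = p2"
      using fun_cong[OF eq, of n] permutes_not_in[OF s(1), of n] permutes_not_in[OF s(2), of n]
      by simp
    moreover from this have "s1 = s2"
      using eq by (auto intro: transpose_eq_imp_eq simp: fun_eq_iff)
    ultimately show "s1 = s2 \<and> p1 = p2" by simp
  qed
next
  show "(\<lambda>(s', p). Transposition.transpose p n \<circ> s') ` ({s. s permutes {..<n}} \<times> {..n}) =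
      {s. s permutes {..<Suc n}}"
  proof (intro equalityI subsetI)
    fix s assume "s \<in> (\<lambda>(s', p). Transposition.transpose p n \<circ> s') ` ({s. s permutes {..<n}} \<times> {..n})"
    then obtain s' p where "s' permutes {..<n}" "p \<le> n" "s = Transposition.transpose p n \<circ> s'"
      by auto
    then show "s \<in> {s. s permutes {..<Suc n}}" by (simp add: transpose_comp_permutes_Suc)
  next
    fix s assume "s \<in> {s. s permutes {..<Suc n}}"
    then have s: "s permutes insert n {..<n}" by (simp add: lessThan_Suc)
    then have "s n \<le> n" using permutes_in_image[OF s, of n] by auto
    moreover have "Transposition.transpose n (s n) \<circ> s permutes {..<n}"
      using permutes_insert_lemma[OF s] by simp
    moreover have "s = Transposition.transpose (s n) n \<circ> (Transposition.transpose n (s n) \<circ> s)"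
      by (simp add: fun_eq_iff transpose_commute)
    ultimately show "s \<in> (\<lambda>(s', p). Transposition.transpose p n \<circ> s') ` ({s. s permutes {..<n}} \<times> {..n})"
      by (intro image_eqI[of _ _ "(Transposition.transpose n (s n) \<circ> s, s n)"]) auto
  qed
qed

section \<open>Cycle products and cycle weights\<close>

lemma funpow_permutes_lessThan:
  assumes "s permutes {..<(n::nat)}" and "i < n"
  shows "(s ^^ k) i < n"
  using permutes_in_image[OF permutes_funpow[OF assms(1)], of k i] assms(2) by simp

lemma perm_cycles_some_less:
  assumes "s permutes {..<n}" and "C \<in> perm_cycles n s"
  shows "(SOME i. i \<in> C) < n"
proof -
  obtain i where i: "i < n" "C = orbit s i" using assms(2) unfolding perm_cycles_def by auto
  then have "i \<in> C" using permutation_self_in_orbit[OF permutation_permutes_lessThan[OF assms(1)]]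
    by simp
  then have "(SOME i. i \<in> C) \<in> C" by (rule someI)
  then show ?thesis using permutes_orbit_subset[OF assms(1), of i] i by auto
qed

text \<open>The product around the cycle \<open>C\<close> starts at an arbitrary point of \<open>C\<close>; for central \<open>f\<close>
  the starting point is irrelevant and \<open>cycle_factor\<close> is \<open>f\<close> at the colour of \<open>C\<close>.\<close>
definition cycle_factor ::
    "('a, 'b) monoid_scheme \<Rightarrow> ('a \<Rightarrow> 'c) \<Rightarrow> (nat \<Rightarrow> nat) \<Rightarrow> (nat \<Rightarrow> 'a) \<Rightarrow> nat set \<Rightarrow> 'c"
  where "cycle_factor G f s g C = f (cyc_prod G g s (SOME i. i \<in> C) (card C))"

definition cycle_weight ::
    "('a, 'b) monoid_scheme \<Rightarrow> ('a \<Rightarrow> 'c::comm_monoid_mult) \<Rightarrow> nat \<Rightarrow> (nat \<Rightarrow> nat) \<Rightarrow> (nat \<Rightarrow> 'a) \<Rightarrow> 'c"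
  where "cycle_weight G f n s g = (\<Prod>C\<in>perm_cycles n s. cycle_factor G f s g C)"

context group
begin

lemma cyc_prod_closed:
  assumes "\<And>k. k < m \<Longrightarrow> g ((s ^^ k) i) \<in> carrier G"
  shows "cyc_prod G g s i m \<in> carrier G"
  using assms by (induction m) auto

lemma cyc_prod_closed_permutes:
  assumes "s permutes {..<n}" and "g \<in> {..<n} \<rightarrow> carrier G" and "i < n"
  shows "cyc_prod G g s i m \<in> carrier G"
  using assms(2) funpow_permutes_lessThan[OF assms(1,3)] by (intro cyc_prod_closed) auto

lemma cyc_prod_cong:
  assumes "\<And>k. k < m \<Longrightarrow> (s ^^ k) i = (s' ^^ k) i"
    and "\<And>k. k < m \<Longrightarrow> g ((s ^^ k) i) = g' ((s ^^ k) i)"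
  shows "cyc_prod G g s i m = cyc_prod G g' s' i m"
  using assms by (induction m) auto

lemma cyc_prod_shift:
  assumes closed: "\<And>j. g ((s ^^ j) i) \<in> carrier G"
  shows "cyc_prod G g s (s i) k \<otimes> g i = g ((s ^^ k) i) \<otimes> cyc_prod G g s i k"
proof (induction k)
  case 0
  show ?case using closed[of 0] by simp
next
  case (Suc k)
  have shift: "(s ^^ j) (s i) = (s ^^ Suc j) i" for j by (simp add: funpow_swap1)
  have "cyc_prod G g s (s i) k \<in> carrier G" "cyc_prod G g s i k \<in> carrier G"
    by (rule cyc_prod_closed, simp only: shift closed)+
  then have "cyc_prod G g s (s i) (Suc k) \<otimes> g i = g ((s ^^ Suc k) i) \<otimes> (cyc_prod G g s (s i) k \<otimes> g i)"
    using closed[of 0] closed[of "Suc k"] by (simp only: cyc_prod.simps shift) (simp add: m_assoc)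
  also have "\<dots> = g ((s ^^ Suc k) i) \<otimes> cyc_prod G g s i (Suc k)" using Suc by simp
  finally show ?case .
qed

lemma central_fun_cyc_prod_rotate:
  assumes "central_fun G f" and closed: "\<And>j. g ((s ^^ j) i) \<in> carrier G" and "(s ^^ r) i = i"
  shows "f (cyc_prod G g s (s i) r) = f (cyc_prod G g s i r)"
proof -
  have shift: "(s ^^ j) (s i) = (s ^^ Suc j) i" for j by (simp add: funpow_swap1)
  have A: "cyc_prod G g s (s i) r \<in> carrier G" and B: "cyc_prod G g s i r \<in> carrier G"
    by (rule cyc_prod_closed, simp only: shift closed)+
  have gi: "g i \<in> carrier G" using closed[of 0] by simp
  have "cyc_prod G g s (s i) r \<otimes> g i = g i \<otimes> cyc_prod G g s i r"
    using cyc_prod_shift[of g s i r, OF closed] \<open>(s ^^ r) i = i\<close> by simp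
  then have "cyc_prod G g s (s i) r = g i \<otimes> cyc_prod G g s i r \<otimes> inv (g i)"
    using A B gi by (metis inv_closed m_assoc m_closed r_inv r_one)
  then show ?thesis using \<open>central_fun G f\<close> B gi unfolding central_fun_def by simp
qed

lemma central_fun_cyc_prod_orbit:
  assumes "central_fun G f" and perm: "permutation s"
    and closed: "\<And>x. x \<in> orbit s i \<Longrightarrow> g x \<in> carrier G" and "j \<in> orbit s i"
  shows "f (cyc_prod G g s j (card (orbit s i))) = f (cyc_prod G g s i (card (orbit s i)))"
proof -
  have "f (cyc_prod G g s ((s ^^ k) i) (card (orbit s i))) = f (cyc_prod G g s i (card (orbit s i)))" for k
  proof (induction k)
    case (Suc k)
    let ?x = "(s ^^ k) i"
    have x: "?x \<in> orbit s i" using perm by (rule funpow_in_self_orbit)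
    then have "orbit s ?x = orbit s i" by (rule orbit_eq_if_in_orbit[OF perm])
    then have "f (cyc_prod G g s (s ?x) (card (orbit s i))) = f (cyc_prod G g s ?x (card (orbit s i)))"
      using closed funpow_in_orbit[OF x] funpow_card_orbit[OF perm, of ?x]
      by (intro central_fun_cyc_prod_rotate[OF \<open>central_fun G f\<close>]) auto
    then show ?case using Suc by simp
  qed simp
  then show ?thesis using \<open>j \<in> orbit s i\<close> orbit_altdef_permutation[OF perm] by auto
qed

lemma central_fun_cycle_factor:
  assumes "central_fun G f" and s: "s permutes {..<n}" and g: "g \<in> {..<n} \<rightarrow> carrier G"
    and C: "C \<in> perm_cycles n s" and "j \<in> C"
  shows "cycle_factor G f s g C = f (cyc_prod G g s j (card C))"
proof -
  have perm: "permutation s" using s by (rule permutation_permutes_lessThan)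
  obtain i where i: "i < n" "C = orbit s i" using C unfolding perm_cycles_def by auto
  have closed: "g x \<in> carrier G" if "x \<in> orbit s i" for x
    using that g permutes_orbit_subset[OF s, of i] i(1) by auto
  have eq: "f (cyc_prod G g s x (card (orbit s i))) = f (cyc_prod G g s i (card (orbit s i)))"
    if "x \<in> orbit s i" for x
    using central_fun_cyc_prod_orbit[OF assms(1) perm closed that] .
  have "(SOME k. k \<in> C) \<in> C" using \<open>j \<in> C\<close> by (rule someI)
  then show ?thesis
    unfolding cycle_factor_def using eq \<open>j \<in> C\<close> i(2) by simp
qed

lemma cycle_weight_cong:
  assumes s: "s permutes {..<n}" and "\<And>j. j < n \<Longrightarrow> g j = g' j"
  shows "cycle_weight G f n s g = cycle_weight G f n s g'"
  unfolding cycle_weight_def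
proof (rule prod.cong[OF refl])
  fix C assume "C \<in> perm_cycles n s"
  then have "(s ^^ k) (SOME i. i \<in> C) < n" for k
    by (rule funpow_permutes_lessThan[OF s perm_cycles_some_less[OF s]])
  then show "cycle_factor G f s g C = cycle_factor G f s g' C"
    unfolding cycle_factor_def using assms(2) by (simp cong: cyc_prod_cong)
qed

lemma cycle_weight_fixed_point:
  assumes s: "s permutes {..<n}" and "g n \<in> carrier G"
  shows "cycle_weight G f (Suc n) s g = cycle_weight G f n s g * f (g n)"
proof -
  have "orbit s n = {n}" using permutes_not_in[OF s, of n] by (simp add: orbit_eq_singleton_iff)
  then have "perm_cycles (Suc n) s = insert {n} (perm_cycles n s)"
    unfolding perm_cycles_def by (simp add: lessThan_Suc)
  moreover have "{n} \<notin> perm_cycles n s"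
  proof
    assume "{n} \<in> perm_cycles n s"
    then obtain i where "i < n" "{n} = orbit s i" unfolding perm_cycles_def by auto
    then show False using permutes_orbit_subset[OF s, of i] by auto
  qed
  moreover have "finite (perm_cycles n s)" unfolding perm_cycles_def by simp
  ultimately show ?thesis
    unfolding cycle_weight_def cycle_factor_def using \<open>g n \<in> carrier G\<close>
    by (simp add: mult.commute)
qed

lemma cyc_prod_transpose_comp_new_point:
  assumes s': "s' permutes {..<n}" and "p < n" and "g p \<in> carrier G" and "g n \<in> carrier G"
    and "k < card (orbit s' p)"
  shows "cyc_prod G g (Transposition.transpose p n \<circ> s') n (Suc (Suc k)) =
    cyc_prod G (g(p := g p \<otimes> g n)) s' p (Suc k)"
  using \<open>k < card (orbit s' p)\<close>
proof (induction k)
  case 0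
  then show ?case
    using funpow_transpose_comp_new_point[OF s' \<open>p < n\<close>, of 0] assms(3,4) by (simp add: m_assoc)
next
  case (Suc k)
  let ?s = "Transposition.transpose p n \<circ> s'" and ?g' = "g(p := g p \<otimes> g n)"
  have "(s' ^^ Suc k) p \<noteq> p"
    using Suc.prems funpow_neq_below_card_orbit[OF permutation_permutes_lessThan[OF s']] by blast
  then have "g ((?s ^^ Suc (Suc k)) n) = ?g' ((s' ^^ Suc k) p)"
    unfolding funpow_transpose_comp_new_point[OF s' \<open>p < n\<close> Suc.prems] by simp
  with Suc show ?case by (simp only: cyc_prod.simps)
qed

lemma cycle_factor_transpose_comp:
  assumes "central_fun G f" and s': "s' permutes {..<n}" and "p < n"
    and g: "g \<in> {..<Suc n} \<rightarrow> carrier G" and C: "C \<in> perm_cycles n s'"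
  shows "cycle_factor G f (Transposition.transpose p n \<circ> s') g (if p \<in> C then insert n C else C) =
    cycle_factor G f s' (g(p := g p \<otimes> g n)) C"
proof -
  let ?s = "Transposition.transpose p n \<circ> s'" and ?g' = "g(p := g p \<otimes> g n)"
  have s: "?s permutes {..<Suc n}" using s' \<open>p < n\<close> by (simp add: transpose_comp_permutes_Suc)
  have g': "?g' \<in> {..<n} \<rightarrow> carrier G" using g \<open>p < n\<close> by (auto simp: Pi_iff)
  have perm: "permutation s'" using s' by (rule permutation_permutes_lessThan)
  obtain i where i: "i < n" "C = orbit s' i" using C unfolding perm_cycles_def by auto
  have "i \<in> C" using i permutation_self_in_orbit[OF perm] by simp
  have C': "(if p \<in> C then insert n C else C) \<in> perm_cycles (Suc n) ?s"
    using C perm_cycles_transpose_comp[OF s' \<open>p < n\<close>] by blast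
  have "finite C" "n \<notin> C" using permutes_orbit_subset[OF s', of i] i finite_subset by auto
  show ?thesis
  proof (cases "p \<in> C")
    case True
    then have "C = orbit s' p" using i orbit_eq_if_in_orbit[OF perm] by blast
    then obtain k where k: "card C = Suc k" "k < card (orbit s' p)"
      using card_orbit_pos[OF perm, of p] by (metis lessI not0_implies_Suc not_less0)
    have "g p \<in> carrier G" "g n \<in> carrier G" using g \<open>p < n\<close> by auto
    then have "cyc_prod G g ?s n (card (insert n C)) = cyc_prod G ?g' s' p (card C)"
      using \<open>finite C\<close> \<open>n \<notin> C\<close> k(1) cyc_prod_transpose_comp_new_point[OF s' \<open>p < n\<close> _ _ k(2)] by simp
    then show ?thesis
      using central_fun_cycle_factor[OF assms(1) s g C', of n]
        central_fun_cycle_factor[OF assms(1) s' g' C True] True by simp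
  next
    case False
    have "(?s ^^ k) i = (s' ^^ k) i" "(s' ^^ k) i \<noteq> p" for k
      using funpow_transpose_comp_other_point[OF s' \<open>p < n\<close> i(1)] False i(2)
        funpow_in_self_orbit[OF perm, of k i] by auto
    then have "cyc_prod G g ?s i (card C) = cyc_prod G ?g' s' i (card C)"
      by (simp cong: cyc_prod_cong)
    then show ?thesis
      using central_fun_cycle_factor[OF assms(1) s g C', of i]
        central_fun_cycle_factor[OF assms(1) s' g' C \<open>i \<in> C\<close>] False \<open>i \<in> C\<close> by simp
  qed
qed

lemma cycle_weight_transpose_comp:
  assumes "central_fun G f" and s': "s' permutes {..<n}" and "p < n"
    and "g \<in> {..<Suc n} \<rightarrow> carrier G"
  shows "cycle_weight G f (Suc n) (Transposition.transpose p n \<circ> s') g =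
    cycle_weight G f n s' (g(p := g p \<otimes> g n))"
proof -
  let ?ins = "\<lambda>C. if p \<in> C then insert n C else C"
  have "inj_on ?ins (perm_cycles n s')"
  proof (rule inj_on_inverseI)
    fix C assume "C \<in> perm_cycles n s'"
    then have "n \<notin> C"
      unfolding perm_cycles_def using permutes_orbit_subset[OF s'] by fastforce
    then show "?ins C - {n} = C" by simp
  qed
  then show ?thesis
    unfolding cycle_weight_def perm_cycles_transpose_comp[OF s' \<open>p < n\<close>]
    by (rule prod.reindex_cong[where l = ?ins]) (simp_all add: cycle_factor_transpose_comp assms)
qed

lemma class_val_conj_class:
  assumes "central_fun G f" and "x \<in> carrier G"
  shows "class_val f (conj_class G x) = f x"
proof -
  have "x \<in> conj_class G x"
    unfolding conj_class_def using \<open>x \<in> carrier G\<close> by (auto intro!: exI[of _ \<one>])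
  then have "(SOME y. y \<in> conj_class G x) \<in> conj_class G x" by (rule someI)
  then obtain h where "h \<in> carrier G" "(SOME y. y \<in> conj_class G x) = h \<otimes> x \<otimes> inv h"
    unfolding conj_class_def by blast
  then show ?thesis
    using assms unfolding class_val_def central_fun_def by simp
qed

lemma prod_conj_classes_cycle_count:
  fixes h :: "'a set \<Rightarrow> 'c::comm_monoid_mult"
  assumes s: "s permutes {..<n}" and g: "g \<in> {..<n} \<rightarrow> carrier G"
  shows "(\<Prod>c\<in>{c \<in> conj_classes G. cycle_count G n (g, s) c \<noteq> 0}. h c ^ cycle_count G n (g, s) c) =
    (\<Prod>C\<in>perm_cycles n s. h (cycle_color G g s C))"
proof -
  let ?col = "cycle_color G g s"
  have fin: "finite (perm_cycles n s)" unfolding perm_cycles_def by simp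
  have count: "cycle_count G n (g, s) c = card {C \<in> perm_cycles n s. ?col C = c}" for c
    by (simp add: cycle_count_def)
  have "?col C \<in> conj_classes G" if "C \<in> perm_cycles n s" for C
    unfolding cycle_color_def conj_classes_def
    using cyc_prod_closed_permutes[OF s g perm_cycles_some_less[OF s that]] by blast
  then have colours: "{c \<in> conj_classes G. cycle_count G n (g, s) c \<noteq> 0} = ?col ` perm_cycles n s"
    using fin by (auto simp: count card_eq_0_iff)
  have "(\<Prod>C\<in>perm_cycles n s. h (?col C)) =
      (\<Prod>c\<in>?col ` perm_cycles n s. \<Prod>C\<in>{C \<in> perm_cycles n s. ?col C = c}. h (?col C))"
    using fin by (rule prod.image_gen)
  also have "\<dots> = (\<Prod>c\<in>?col ` perm_cycles n s. h c ^ cycle_count G n (g, s) c)"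
    unfolding count by (intro prod.cong refl) (simp add: prod_constant)
  finally show ?thesis unfolding colours ..
qed

lemma ewens_numerator_eq_cycle_weight:
  assumes "central_fun G z" and s: "s permutes {..<n}" and g: "g \<in> {..<n} \<rightarrow> carrier G"
  shows "(\<Prod>c\<in>{c \<in> conj_classes G. cycle_count G n (g, s) c \<noteq> 0}.
      class_val z c ^ cycle_count G n (g, s) c * cnj (class_val z c) ^ cycle_count G n (g, s) c) =
    complex_of_real (cycle_weight G (\<lambda>x. (cmod (z x))\<^sup>2) n s g)"
proof -
  have "(\<Prod>c\<in>{c \<in> conj_classes G. cycle_count G n (g, s) c \<noteq> 0}.
      class_val z c ^ cycle_count G n (g, s) c * cnj (class_val z c) ^ cycle_count G n (g, s) c) =
    (\<Prod>C\<in>perm_cycles n s. class_val z (cycle_color G g s C) * cnj (class_val z (cycle_color G g s C)))"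
    unfolding power_mult_distrib[symmetric] by (rule prod_conj_classes_cycle_count[OF s g])
  also have "\<dots> = complex_of_real (cycle_weight G (\<lambda>x. (cmod (z x))\<^sup>2) n s g)"
    unfolding cycle_weight_def of_real_prod
  proof (rule prod.cong[OF refl])
    fix C assume "C \<in> perm_cycles n s"
    then have "cyc_prod G g s (SOME i. i \<in> C) (card C) \<in> carrier G"
      using cyc_prod_closed_permutes[OF s g perm_cycles_some_less[OF s]] by blast
    then show "class_val z (cycle_color G g s C) * cnj (class_val z (cycle_color G g s C)) =
        complex_of_real (cycle_factor G (\<lambda>x. (cmod (z x))\<^sup>2) s g C)"
      unfolding cycle_color_def cycle_factor_def complex_norm_square
      using class_val_conj_class[OF \<open>central_fun G z\<close>] by simp
  qed
  finally show ?thesis .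
qed

end

section \<open>Compact groups with normalized Haar measure\<close>

locale compact_haar_group = group G for G :: "('a, 'b) monoid_scheme" (structure) +
  fixes T :: "'a topology" and \<mu> :: "'a measure"
  assumes compact_group: "compact_group G T" and haar: "normalized_haar G T \<mu>"
begin

lemma topspace_eq_carrier: "topspace T = carrier G"
  using compact_group unfolding compact_group_def by simp

lemma compact_space_T: "compact_space T"
  using compact_group unfolding compact_group_def by simp

lemma continuous_map_mult:
  assumes "continuous_map X T f" and "continuous_map X T g"
  shows "continuous_map X T (\<lambda>x. f x \<otimes> g x)"
proof -
  have "continuous_map X (prod_topology T T) (\<lambda>x. (f x, g x))"
    using assms by (rule continuous_map_pairedI)
  moreover have "continuous_map (prod_topology T T) T (\<lambda>(x, y). x \<otimes> y)"
    using compact_group unfolding compact_group_def by simp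
  ultimately have "continuous_map X T ((\<lambda>(x, y). x \<otimes> y) \<circ> (\<lambda>x. (f x, g x)))"
    by (rule continuous_map_compose)
  then show ?thesis by (simp add: o_def)
qed

lemma prob_space_haar: "prob_space \<mu>"
  using haar unfolding normalized_haar_def by auto

lemma space_haar: "space \<mu> = carrier G"
  using haar unfolding normalized_haar_def by auto

lemma sets_haar: "sets \<mu> = sets (borel_of_top T)"
  using haar unfolding normalized_haar_def by auto

lemma openin_in_sets_haar:
  assumes "openin T U"
  shows "U \<in> sets \<mu>"
proof -
  have "{U. openin T U} \<subseteq> Pow (topspace T)" using openin_subset by auto
  then show ?thesis
    using assms unfolding sets_haar borel_of_top_def by (simp add: sets_measure_of sigma_sets.Basic)
qed

lemma measurable_right_translation:
  assumes "h \<in> carrier G"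
  shows "(\<lambda>x. x \<otimes> h) \<in> \<mu> \<rightarrow>\<^sub>M \<mu>"
proof -
  have cont: "continuous_map T T (\<lambda>x. x \<otimes> h)"
    using assms by (intro continuous_map_mult) (auto simp: topspace_eq_carrier)
  have "(\<lambda>x. x \<otimes> h) \<in> \<mu> \<rightarrow>\<^sub>M borel_of_top T"
    unfolding borel_of_top_def
  proof (rule measurable_measure_of)
    show "(\<lambda>x. x \<otimes> h) \<in> space \<mu> \<rightarrow> topspace T"
      using assms by (auto simp: space_haar topspace_eq_carrier)
    fix U assume "U \<in> {U. openin T U}"
    then have "openin T {x \<in> topspace T. x \<otimes> h \<in> U}"
      using openin_continuous_map_preimage[OF cont] by simp
    moreover have "{x \<in> topspace T. x \<otimes> h \<in> U} = (\<lambda>x. x \<otimes> h) -` U \<inter> space \<mu>"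
      by (auto simp: space_haar topspace_eq_carrier)
    ultimately show "(\<lambda>x. x \<otimes> h) -` U \<inter> space \<mu> \<in> sets \<mu>"
      using openin_in_sets_haar by simp
  qed (use openin_subset in blast)
  then show ?thesis unfolding measurable_cong_sets[OF refl sets_haar] .
qed

lemma distr_right_translation:
  assumes h: "h \<in> carrier G"
  shows "distr \<mu> \<mu> (\<lambda>x. x \<otimes> h) = \<mu>"
proof (rule measure_eqI)
  interpret prob_space \<mu> by (rule prob_space_haar)
  fix A assume "A \<in> sets (distr \<mu> \<mu> (\<lambda>x. x \<otimes> h))"
  then have A: "A \<in> sets \<mu>" by simp
  then have "A \<subseteq> carrier G" using sets.sets_into_space space_haar by blast
  then have "(\<lambda>x. x \<otimes> h) -` A \<inter> space \<mu> = (\<lambda>x. x \<otimes> inv h) ` A"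
  proof (intro equalityI subsetI)
    fix x assume "x \<in> (\<lambda>x. x \<otimes> h) -` A \<inter> space \<mu>"
    then have "x \<in> carrier G" "x \<otimes> h \<in> A" by (auto simp: space_haar)
    moreover from this have "x = x \<otimes> h \<otimes> inv h" using h by (simp add: m_assoc)
    ultimately show "x \<in> (\<lambda>x. x \<otimes> inv h) ` A" by blast
  next
    fix x assume "x \<in> (\<lambda>x. x \<otimes> inv h) ` A"
    then obtain y where "y \<in> A" "x = y \<otimes> inv h" by blast
    moreover from this have "y \<in> carrier G" using \<open>A \<subseteq> carrier G\<close> by blast
    ultimately show "x \<in> (\<lambda>x. x \<otimes> h) -` A \<inter> space \<mu>"
      using h by (simp add: space_haar m_assoc)
  qed
  then have "emeasure (distr \<mu> \<mu> (\<lambda>x. x \<otimes> h)) A = measure \<mu> ((\<lambda>x. x \<otimes> inv h) ` A)"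
    using A by (simp add: emeasure_distr[OF measurable_right_translation[OF h]] emeasure_eq_measure)
  also have "\<dots> = measure \<mu> A"
    using haar h A unfolding normalized_haar_def by simp
  finally show "emeasure (distr \<mu> \<mu> (\<lambda>x. x \<otimes> h)) A = emeasure \<mu> A"
    by (simp add: emeasure_eq_measure)
qed simp

lemma integral_right_translation:
  fixes f :: "'a \<Rightarrow> 'c::{banach, second_countable_topology}"
  assumes "h \<in> carrier G" and "f \<in> borel_measurable \<mu>"
  shows "(\<integral>x. f (x \<otimes> h) \<partial>\<mu>) = integral\<^sup>L \<mu> f"
  using integral_distr[OF measurable_right_translation assms(2)] distr_right_translation assms(1)
  by simp

lemma integrable_continuous_map:
  assumes "continuous_map T euclideanreal f"
  shows "integrable \<mu> f"
proof -
  interpret prob_space \<mu> by (rule prob_space_haar)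
  obtain B where B: "\<And>x. x \<in> topspace T \<Longrightarrow> \<bar>f x\<bar> \<le> B"
    using continuous_map_compact_bounded[OF compact_space_T assms] by blast
  have "f \<in> borel_measurable \<mu>"
    using compact_space_T space_haar topspace_eq_carrier openin_in_sets_haar assms
    by (intro borel_measurable_continuous_map_compact) auto
  then show ?thesis using B by (intro integrable_const_bound[where B = B]) (auto simp: space_haar topspace_eq_carrier)
qed

lemma integral_pos_continuous_map:
  assumes "continuous_map T euclideanreal f" and "\<And>x. x \<in> carrier G \<Longrightarrow> 0 < f x"
  shows "0 < (\<integral>x. f x \<partial>\<mu>)"
proof -
  interpret prob_space \<mu> by (rule prob_space_haar)
  have "compact (f ` carrier G)"
    using image_compactin[OF compact_space_T[unfolded compact_space_def] assms(1)]
    by (simp add: topspace_eq_carrier)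
  moreover have "f ` carrier G \<noteq> {}" by blast
  ultimately obtain d where "d \<in> f ` carrier G" "\<And>y. y \<in> f ` carrier G \<Longrightarrow> d \<le> y"
    using compact_attains_inf by metis
  then have "0 < d" "\<And>x. x \<in> carrier G \<Longrightarrow> d \<le> f x" using assms(2) by auto
  have "d = (\<integral>x. d \<partial>\<mu>)" by (simp add: prob_space)
  also have "\<dots> \<le> (\<integral>x. f x \<partial>\<mu>)"
    using integrable_continuous_map[OF assms(1)] \<open>\<And>x. x \<in> carrier G \<Longrightarrow> d \<le> f x\<close>
    by (intro integral_mono) (auto simp: space_haar)
  finally show ?thesis using \<open>0 < d\<close> by simp
qed

abbreviation haar_pow :: "'i set \<Rightarrow> ('i \<Rightarrow> 'a) measure"
  where "haar_pow I \<equiv> Pi\<^sub>M I (\<lambda>_. \<mu>)"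

abbreviation top_pow :: "'i set \<Rightarrow> ('i \<Rightarrow> 'a) topology"
  where "top_pow I \<equiv> product_topology (\<lambda>_. T) I"

lemma prob_space_haar_pow: "prob_space (haar_pow I)"
  by (rule prob_space_PiM) (rule prob_space_haar)

lemma space_haar_pow: "space (haar_pow I) = topspace (top_pow I)"
  by (simp add: space_PiM space_haar topspace_eq_carrier)

lemma haar_pow_carrier: "x \<in> space (haar_pow I) \<Longrightarrow> j \<in> I \<Longrightarrow> x j \<in> carrier G"
  by (auto simp: space_PiM space_haar)

lemma compact_space_top_pow: "compact_space (top_pow I)"
  unfolding compact_space_product_topology using compact_space_T by blast

lemma borel_measurable_haar_pow:
  assumes "finite I" and F: "continuous_map (top_pow I) euclideanreal F"
  shows "F \<in> borel_measurable (haar_pow I)"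
proof (rule borel_measurable_continuous_map_compact[OF compact_space_top_pow space_haar_pow _ F])
  fix U x assume "openin (top_pow I) U" "x \<in> U"
  then obtain V where V: "\<forall>i\<in>I. openin T (V i)" "x \<in> PiE I V" "PiE I V \<subseteq> U"
    unfolding openin_product_topology_alt by blast
  then have "PiE I V \<in> sets (haar_pow I)"
    using \<open>finite I\<close> openin_in_sets_haar by (intro sets_PiM_I_finite) auto
  moreover have "openin (top_pow I) (PiE I V)"
    using V(1) by (subst openin_PiE[OF \<open>finite I\<close>]) blast
  ultimately show "\<exists>B\<in>sets (haar_pow I). openin (top_pow I) B \<and> x \<in> B \<and> B \<subseteq> U"
    using V(2,3) by blast
qed

lemma integrable_haar_pow:
  assumes "finite I" and F: "continuous_map (top_pow I) euclideanreal F"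
  shows "integrable (haar_pow I) F"
proof -
  interpret prob_space "haar_pow I" by (rule prob_space_haar_pow)
  obtain B where "\<And>x. x \<in> topspace (top_pow I) \<Longrightarrow> \<bar>F x\<bar> \<le> B"
    using continuous_map_compact_bounded[OF compact_space_top_pow F] by blast
  then show ?thesis
    using borel_measurable_haar_pow[OF assms]
    by (intro integrable_const_bound[where B = B]) (auto simp: space_haar_pow)
qed

lemma integral_haar_pow_insert:
  assumes "finite I" and "j \<notin> I" and "continuous_map (top_pow (insert j I)) euclideanreal F"
  shows "integral\<^sup>L (haar_pow (insert j I)) F = (\<integral>x. (\<integral>y. F (x(j := y)) \<partial>\<mu>) \<partial>haar_pow I)"
proof -
  interpret product_sigma_finite "\<lambda>_. \<mu>"
    unfolding product_sigma_finite_def using prob_space_imp_sigma_finite[OF prob_space_haar] by simp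
  show ?thesis
    using assms by (intro product_integral_insert integrable_haar_pow) auto
qed

lemma integral_haar_pow_insert_irrelevant:
  assumes "finite I" and "j \<notin> I" and "continuous_map (top_pow (insert j I)) euclideanreal F"
    and "\<And>x y. x \<in> space (haar_pow I) \<Longrightarrow> F (x(j := y)) = F x"
  shows "integral\<^sup>L (haar_pow (insert j I)) F = integral\<^sup>L (haar_pow I) F"
proof -
  interpret prob_space \<mu> by (rule prob_space_haar)
  show ?thesis
    unfolding integral_haar_pow_insert[OF assms(1-3)]
    by (rule Bochner_Integration.integral_cong[OF refl]) (simp add: assms(4) prob_space)
qed

lemma integral_haar_pow_right_translate_coordinate:
  assumes "finite I" and "p \<in> I" and "q \<in> I" and "p \<noteq> q"
    and F: "continuous_map (top_pow I) euclideanreal F"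
    and F': "continuous_map (top_pow I) euclideanreal (\<lambda>x. F (x(p := x p \<otimes> x q)))"
  shows "(\<integral>x. F (x(p := x p \<otimes> x q)) \<partial>haar_pow I) = integral\<^sup>L (haar_pow I) F"
proof -
  define J where "J = I - {p}"
  have J: "finite J" "p \<notin> J" "q \<in> J" "insert p J = I"
    using assms(1-4) by (auto simp: J_def)
  have "(\<integral>x. F (x(p := x p \<otimes> x q)) \<partial>haar_pow I) = (\<integral>x. (\<integral>y. F (x(p := y \<otimes> x q)) \<partial>\<mu>) \<partial>haar_pow J)"
    using integral_haar_pow_insert[OF J(1,2), of "\<lambda>x. F (x(p := x p \<otimes> x q))"] F' J(4) \<open>p \<noteq> q\<close>
    by simp
  also have "\<dots> = (\<integral>x. (\<integral>y. F (x(p := y)) \<partial>\<mu>) \<partial>haar_pow J)"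
  proof (rule Bochner_Integration.integral_cong[OF refl])
    fix x assume x: "x \<in> space (haar_pow J)"
    have "F \<in> borel_measurable (haar_pow (insert p J))"
      unfolding J(4) using assms(1) F by (rule borel_measurable_haar_pow)
    then have "(\<lambda>y. F (x(p := y))) \<in> borel_measurable \<mu>"
      using measurable_comp[OF measurable_component_update[OF x J(2)]] by (simp add: o_def)
    then show "(\<integral>y. F (x(p := y \<otimes> x q)) \<partial>\<mu>) = (\<integral>y. F (x(p := y)) \<partial>\<mu>)"
      by (rule integral_right_translation[OF haar_pow_carrier[OF x J(3)]])
  qed
  also have "\<dots> = integral\<^sup>L (haar_pow I) F"
    using integral_haar_pow_insert[OF J(1,2), of F] F J(4) by simp
  finally show ?thesis .
qed

lemma continuous_map_cyc_prod:
  assumes "\<And>k. k < m \<Longrightarrow> continuous_map X T (\<lambda>x. h x ((s ^^ k) i))"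
  shows "continuous_map X T (\<lambda>x. cyc_prod G (h x) s i m)"
  using assms by (induction m) (auto simp: topspace_eq_carrier intro: continuous_map_mult)

lemma continuous_map_cycle_weight:
  assumes f: "continuous_map T euclideanreal f" and s: "s permutes {..<n}"
    and h: "\<And>j. j < n \<Longrightarrow> continuous_map X T (\<lambda>x. h x j)"
  shows "continuous_map X euclideanreal (\<lambda>x. cycle_weight G f n s (h x))"
  unfolding cycle_weight_def
proof (rule continuous_map_prod)
  show "finite (perm_cycles n s)" unfolding perm_cycles_def by simp
  fix C assume "C \<in> perm_cycles n s"
  then have "continuous_map X T (\<lambda>x. cyc_prod G (h x) s (SOME i. i \<in> C) (card C))"
    by (intro continuous_map_cyc_prod h funpow_permutes_lessThan[OF s] perm_cycles_some_less[OF s])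
  then show "continuous_map X euclideanreal (\<lambda>x. cycle_factor G f s (h x) C)"
    unfolding cycle_factor_def
    using continuous_map_compose[OF _ f] by (simp add: o_def)
qed

lemma continuous_map_cycle_weight_haar_pow:
  assumes "continuous_map T euclideanreal f" and "s permutes {..<n}" and "{..<n} \<subseteq> I"
  shows "continuous_map (top_pow I) euclideanreal (cycle_weight G f n s)"
  using continuous_map_cycle_weight[OF assms(1,2), of "top_pow I" "\<lambda>x. x"] assms(3)
  by (auto intro: continuous_map_product_projection)

context
  fixes f :: "'a \<Rightarrow> real"
  assumes f_continuous: "continuous_map T euclideanreal f" and f_central: "central_fun G f"
begin

lemma integral_cycle_weight_fixed_point:
  assumes s: "s permutes {..<n}"
  shows "integral\<^sup>L (haar_pow {..<Suc n}) (cycle_weight G f (Suc n) s) =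
    (\<integral>x. f x \<partial>\<mu>) * integral\<^sup>L (haar_pow {..<n}) (cycle_weight G f n s)"
proof -
  let ?W = "cycle_weight G f n s"
  have "continuous_map (top_pow (insert n {..<n})) euclideanreal (\<lambda>g. f (g n))"
    using continuous_map_compose[OF continuous_map_product_projection[of n _ "\<lambda>_. T"] f_continuous]
    by (simp add: o_def)
  then have cont: "continuous_map (top_pow (insert n {..<n})) euclideanreal (\<lambda>g. ?W g * f (g n))"
    using continuous_map_cycle_weight_haar_pow[OF f_continuous s]
    by (intro continuous_map_real_mult) auto
  have "integral\<^sup>L (haar_pow {..<Suc n}) (cycle_weight G f (Suc n) s) =
      integral\<^sup>L (haar_pow (insert n {..<n})) (\<lambda>g. ?W g * f (g n))"
    unfolding lessThan_Suc
    by (intro Bochner_Integration.integral_cong refl cycle_weight_fixed_point[OF s] haar_pow_carrier)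
      auto
  also have "\<dots> = (\<integral>x. (\<integral>y. ?W (x(n := y)) * f y \<partial>\<mu>) \<partial>haar_pow {..<n})"
    using integral_haar_pow_insert[OF _ _ cont] by simp
  also have "\<dots> = (\<integral>x. (\<integral>y. f y \<partial>\<mu>) * ?W x \<partial>haar_pow {..<n})"
    using cycle_weight_cong[OF s, of "x(n := y)" x f for x y] by (simp add: mult.commute)
  finally show ?thesis by simp
qed

lemma integral_cycle_weight_transpose_comp:
  assumes s': "s' permutes {..<n}" and "p < n"
  shows "integral\<^sup>L (haar_pow {..<Suc n}) (cycle_weight G f (Suc n) (Transposition.transpose p n \<circ> s')) =
    integral\<^sup>L (haar_pow {..<n}) (cycle_weight G f n s')"
proof -
  let ?W = "cycle_weight G f n s'"
  have proj: "continuous_map (top_pow {..<Suc n}) T (\<lambda>x. x i)" if "i < Suc n" for i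
    using that by (intro continuous_map_product_projection) auto
  have "continuous_map (top_pow {..<Suc n}) T (\<lambda>x. (x(p := x p \<otimes> x n)) j)" if "j < n" for j
    using that \<open>p < n\<close> by (cases "j = p") (simp_all add: proj continuous_map_mult)
  then have "continuous_map (top_pow {..<Suc n}) euclideanreal (\<lambda>x. ?W (x(p := x p \<otimes> x n)))"
    by (rule continuous_map_cycle_weight[OF f_continuous s'])
  then have "integral\<^sup>L (haar_pow {..<Suc n}) (\<lambda>x. ?W (x(p := x p \<otimes> x n))) =
      integral\<^sup>L (haar_pow {..<Suc n}) ?W"
    using \<open>p < n\<close> continuous_map_cycle_weight_haar_pow[OF f_continuous s']
    by (intro integral_haar_pow_right_translate_coordinate) auto
  also have "\<dots> = integral\<^sup>L (haar_pow {..<n}) ?W"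
    unfolding lessThan_Suc using continuous_map_cycle_weight_haar_pow[OF f_continuous s']
    by (intro integral_haar_pow_insert_irrelevant cycle_weight_cong[OF s']) auto
  finally show ?thesis
    using cycle_weight_transpose_comp[OF f_central s' \<open>p < n\<close>]
    by (simp add: haar_pow_carrier Pi_iff cong: Bochner_Integration.integral_cong)
qed

theorem sum_integral_cycle_weight:
  "(\<Sum>s | s permutes {..<n}. integral\<^sup>L (haar_pow {..<n}) (cycle_weight G f n s)) =
    pochhammer (\<integral>x. f x \<partial>\<mu>) n"
proof (induction n)
  case 0
  interpret prob_space "haar_pow {}" by (rule prob_space_haar_pow)
  show ?case by (simp add: cycle_weight_def perm_cycles_def prob_space)
next
  case (Suc n)
  let ?I = "\<integral>x. f x \<partial>\<mu>"
  let ?w = "\<lambda>m s. integral\<^sup>L (haar_pow {..<m}) (cycle_weight G f m s)"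
  have split: "(\<Sum>p\<le>n. ?w (Suc n) (Transposition.transpose p n \<circ> s')) = (?I + n) * ?w n s'"
    if s': "s' permutes {..<n}" for s'
  proof -
    have "(\<Sum>p\<le>n. ?w (Suc n) (Transposition.transpose p n \<circ> s')) =
        ?w (Suc n) s' + (\<Sum>p<n. ?w (Suc n) (Transposition.transpose p n \<circ> s'))"
      by (simp add: lessThan_Suc_atMost[symmetric] lessThan_Suc)
    also have "\<dots> = ?I * ?w n s' + n * ?w n s'"
      using integral_cycle_weight_fixed_point[OF s'] integral_cycle_weight_transpose_comp[OF s']
      by simp
    finally show ?thesis by (simp add: algebra_simps)
  qed
  have "(\<Sum>s | s permutes {..<Suc n}. ?w (Suc n) s) =
      (\<Sum>(s', p) \<in> {s. s permutes {..<n}} \<times> {..n}. ?w (Suc n) (Transposition.transpose p n \<circ> s'))"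
    by (rule sum.reindex_bij_betw[OF bij_betw_transpose_comp_permutes, symmetric, THEN trans])
      (simp add: case_prod_beta')
  also have "\<dots> = (\<Sum>s' | s' permutes {..<n}. (?I + n) * ?w n s')"
    by (simp add: sum.cartesian_product[symmetric] split)
  also have "\<dots> = pochhammer ?I (Suc n)"
    using Suc by (simp add: sum_distrib_left[symmetric] pochhammer_Suc mult.commute)
  finally show ?case .
qed

end

lemma integral_wreath_measure:
  fixes F :: "(nat \<Rightarrow> 'a) \<times> (nat \<Rightarrow> nat) \<Rightarrow> real"
  assumes "\<And>s. s permutes {..<n} \<Longrightarrow> continuous_map (top_pow {..<n}) euclideanreal (\<lambda>g. F (g, s))"
  shows "(\<integral>x. F x \<partial>wreath_measure n \<mu>) =
    (\<Sum>s | s permutes {..<n}. \<integral>g. F (g, s) \<partial>haar_pow {..<n}) / fact n"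
proof -
  have "finite {s. s permutes {..<n}}" "{s. s permutes {..<n}} \<noteq> {}"
    by (auto simp: finite_permutations intro: permutes_id)
  then have "(\<integral>(g, s). F (g, s) \<partial>wreath_measure n \<mu>) =
      (\<Sum>s | s permutes {..<n}. \<integral>g. F (g, s) \<partial>haar_pow {..<n}) / card {s. s permutes {..<n}}"
    unfolding wreath_measure_def using assms
    by (intro integral_pair_uniform_count_measure prob_space_imp_sigma_finite prob_space_haar_pow
        integrable_haar_pow) auto
  then show ?thesis by (simp add: card_permutations)
qed

lemma ewens_density_eq_cycle_weight:
  assumes "central_fun G z" and "x \<in> space (wreath_measure n \<mu>)"
  shows "ewens_density G \<mu> z n x = complex_of_real (fact n / pochhammer (\<integral>g. (cmod (z g))\<^sup>2 \<partial>\<mu>) n *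
    cycle_weight G (\<lambda>g. (cmod (z g))\<^sup>2) n (snd x) (fst x))"
proof -
  obtain g s where x: "x = (g, s)" and "g \<in> space (haar_pow {..<n})" "s permutes {..<n}"
    using assms(2) by (auto simp: wreath_measure_def space_pair_measure space_uniform_count_measure)
  then have "g \<in> {..<n} \<rightarrow> carrier G" using haar_pow_carrier[of g "{..<n}"] by auto
  then show ?thesis
    unfolding x ewens_density_def Let_def
      ewens_numerator_eq_cycle_weight[OF assms(1) \<open>s permutes {..<n}\<close> \<open>g \<in> {..<n} \<rightarrow> carrier G\<close>]
    by simp
qed

end

theorem mainTheorem2:
  fixes G :: "('a, 'b) monoid_scheme" and T :: "'a topology" and \<mu> :: "'a measure"
    and z :: "'a \<Rightarrow> complex" and n :: nat
  assumes "compact_group G T"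
    and "normalized_haar G T \<mu>"
    and "continuous_map T euclidean z"
    and "\<forall>g\<in>carrier G. z g \<noteq> 0"
    and "central_fun G z"
  shows "(\<integral>x. ewens_density G \<mu> z n x \<partial>(wreath_measure n \<mu>)) = 1"
proof -
  have "group G" using assms(1) unfolding compact_group_def by simp
  interpret compact_haar_group G T \<mu>
    using \<open>group G\<close> assms(1,2) by (simp add: compact_haar_group_def compact_haar_group_axioms_def)
  define f where "f = (\<lambda>x. (cmod (z x))\<^sup>2)"
  define I where "I = (\<integral>x. f x \<partial>\<mu>)"
  have f: "continuous_map T euclideanreal f" "central_fun G f"
    using assms(3,5) unfolding f_def central_fun_def by (auto intro: continuous_intros)
  have "0 < I" unfolding I_def using assms(4) by (intro integral_pos_continuous_map[OF f(1)]) (simp add: f_def)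
  have "(\<integral>x. ewens_density G \<mu> z n x \<partial>(wreath_measure n \<mu>)) =
      of_real (\<integral>x. fact n / pochhammer I n * cycle_weight G f n (snd x) (fst x) \<partial>wreath_measure n \<mu>)"
    using ewens_density_eq_cycle_weight[OF assms(5)]
    by (simp add: f_def I_def cong: Bochner_Integration.integral_cong)
  also have "(\<integral>x. fact n / pochhammer I n * cycle_weight G f n (snd x) (fst x) \<partial>wreath_measure n \<mu>) =
      fact n / pochhammer I n * pochhammer I n / fact n"
    using continuous_map_cycle_weight_haar_pow[OF f(1)]
    by (simp add: integral_wreath_measure continuous_map_real_mult_left sum_distrib_left[symmetric]
        sum_integral_cycle_weight[OF f] I_def)
  finally show ?thesis using pochhammer_pos[OF \<open>0 < I\<close>, of n] by simp
qed

end
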